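(* Let $\Omega$ be a bounded domain in $\mathbb{R}^n$ (or $\mathbb{C}^n$), let $x\in\overline\Omega$, and let $\mathcal{E}$ be a closed subspace of $\mathcal{C}(\overline\Omega)$ (with the sup-norm). Suppose there exist constants $0<\alpha<1$, $0<s\leq 1$, $0<t<1$, $0<A<1$ and $C>0$ such that for each neighbourhood $U$ of $x$ (in $\overline\Omega$) with $\mathrm{r}_x(U)<1$, there exists a function $f_U\in\mathcal{E}$ with the properties 1) $f_U(x)=1$; 2) $|f_U(y)|\leq\alpha$ for all $y\in\overline\Omega\setminus U$; 3) $|f_U(y)|\leq C\,\big(\log[1/\mathrm{r}_x(U)]\big)^t$ for all $y\in U$; and 4) $\{y\in\overline\Omega : |f_U(y)|<1+\varepsilon^s\}\supset B(x;A\,\mathrm{r}_x(U)\,\varepsilon)$ for every $0<\varepsilon<1$. Then there exists a function $F\in\mathcal{E}$ which peaks at $x$.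
   Context: $\mathcal{C}(\overline\Omega)$ denotes the space of all complex-valued continuous functions on $\overline\Omega$. For a set $U$ containing $x$, $\mathrm{r}_x(U):=\sup_{y\in U}|y-x|$, where $|\cdot|$ is the Euclidean norm. For $y\in\overline\Omega$ and $r>0$, $B(y;r):=\overline\Omega\cap\mathbb{B}(y;r)$, where $\mathbb{B}(y;r)$ is the open Euclidean ball of center $y$ and radius $r$. A function $f\in\mathcal{E}$ is said to peak at $x$ if $f(x)=1$ and $|f(y)|<1$ for all $y\in\overline\Omega\setminus\{x\}$. *)

theory Defs
  imports "HOL-Analysis.Analysis"
begin

text \<open>Elements of C(closure Omega) are represented by functions 'a => complex that are
  continuous on closure Omega and vanish outside closure Omega (canonical representatives).\<close>
definition cfun_space :: "'a::euclidean_space set \<Rightarrow> ('a \<Rightarrow> complex) set" where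
  "cfun_space \<Omega> = {f. continuous_on (closure \<Omega>) f \<and> (\<forall>y. y \<notin> closure \<Omega> \<longrightarrow> f y = 0)}"

definition closed_subspace_C :: "'a::euclidean_space set \<Rightarrow> ('a \<Rightarrow> complex) set \<Rightarrow> bool" where
  "closed_subspace_C \<Omega> E \<longleftrightarrow>
     E \<subseteq> cfun_space \<Omega> \<and>
     (\<lambda>y. 0) \<in> E \<and>
     (\<forall>f\<in>E. \<forall>g\<in>E. (\<lambda>y. f y + g y) \<in> E) \<and>
     (\<forall>c::complex. \<forall>f\<in>E. (\<lambda>y. c * f y) \<in> E) \<and>
     (\<forall>f\<in>cfun_space \<Omega>.
        (\<forall>e>0. \<exists>g\<in>E. \<forall>y\<in>closure \<Omega>. cmod (f y - g y) \<le> e) \<longrightarrow> f \<in> E)"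

definition nbhd_in_closure :: "'a::euclidean_space set \<Rightarrow> 'a \<Rightarrow> 'a set \<Rightarrow> bool" where
  "nbhd_in_closure \<Omega> x U \<longleftrightarrow> U \<subseteq> closure \<Omega> \<and>
     (\<exists>V. open V \<and> x \<in> V \<and> closure \<Omega> \<inter> V \<subseteq> U)"

definition rx :: "'a::euclidean_space \<Rightarrow> 'a set \<Rightarrow> real" where
  "rx x U = (SUP y\<in>U. dist y x)"

definition Bcl :: "'a::euclidean_space set \<Rightarrow> 'a \<Rightarrow> real \<Rightarrow> 'a set" where
  "Bcl \<Omega> y r = closure \<Omega> \<inter> ball y r"

definition peaks_at :: "'a::euclidean_space set \<Rightarrow> ('a \<Rightarrow> complex) \<Rightarrow> 'a \<Rightarrow> bool" where
  "peaks_at \<Omega> f x \<longleftrightarrow> f x = 1 \<and> (\<forall>y\<in>closure \<Omega> - {x}. cmod (f y) < 1)"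

end

theory Submission
  imports Defs "HOL-Real_Asymp.Real_Asymp"
begin

text \<open>The peak function is a convex combination \<open>F = \<Sum>k. w\<^sub>k f\<^sub>k\<close> of the given functions for the
  shrinking neighbourhoods \<open>U\<^sub>k = closure \<Omega> \<inter> cball x \<rho>\<^sub>k\<close>, with weights
  \<open>w\<^sub>k = N / ((N + k) (N + k + 1))\<close>, whose tails are \<open>N / (N + m)\<close>. A point \<open>y \<noteq> x\<close> lies in some
  annulus \<open>\<rho>\<^sub>m\<^sub>+\<^sub>1 < |y - x| \<le> \<rho>\<^sub>m\<close>: the terms \<open>k > m\<close> are at most \<open>\<alpha>\<close>, the term \<open>k = m\<close> is controlled
  by the logarithmic bound 3), and the terms \<open>k < m\<close> are at most \<open>1 + (2\<rho>\<^sub>m / A\<rho>\<^sub>k)\<^sup>s\<close> by 4). With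
  \<open>\<rho>\<^sub>k = exp (-(N + k)\<^sup>a)\<close> for some \<open>1 < a < 1/t\<close> the bound 3) grows like \<open>(N + k)\<^sup>a\<^sup>t\<close>, sublinearly,
  while \<open>\<rho>\<^sub>k / \<rho>\<^sub>k\<^sub>-\<^sub>1\<close> decays faster than any power of \<open>N + k\<close>; for large \<open>N\<close> the loss on the
  first \<open>m + 1\<close> terms is then smaller than the gain \<open>(1 - \<alpha>) N / (N + m + 1)\<close> on the tail, so
  \<open>|F y| < 1 = F x\<close>.\<close>

lemma closed_subspace_C_suminf:
  fixes f :: "nat \<Rightarrow> 'a::euclidean_space \<Rightarrow> complex"
  assumes E: "closed_subspace_C \<Omega> E" and f: "\<And>k. f k \<in> E"
    and bound: "\<And>k y. cmod (f k y) \<le> B k" and "summable B"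
  shows "(\<lambda>y. \<Sum>k. f k y) \<in> E"
proof -
  define S where "S n y = (\<Sum>k<n. f k y)" for n y
  have E_cfun: "E \<subseteq> cfun_space \<Omega>"
    and E_closed: "\<And>h. h \<in> cfun_space \<Omega> \<Longrightarrow>
        (\<forall>e>0. \<exists>g\<in>E. \<forall>y\<in>closure \<Omega>. cmod (h y - g y) \<le> e) \<Longrightarrow> h \<in> E"
    using E unfolding closed_subspace_C_def by blast+
  have S_E: "S n \<in> E" for n
  proof (induction n)
    case 0
    then show ?case using E by (simp add: S_def closed_subspace_C_def)
  next
    case (Suc n)
    then show ?case using E f by (simp add: S_def closed_subspace_C_def)
  qed
  have lim: "uniform_limit UNIV S (\<lambda>y. \<Sum>k. f k y) sequentially"
    unfolding S_def by (rule Weierstrass_m_test[OF bound \<open>summable B\<close>])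
  have "continuous_on (closure \<Omega>) (S n)" for n
    using S_E E_cfun by (auto simp: cfun_space_def)
  then have "continuous_on (closure \<Omega>) (\<lambda>y. \<Sum>k. f k y)"
    by (intro uniform_limit_theorem[OF _ uniform_limit_on_subset[OF lim]]) auto
  moreover have "f k y = 0" if "y \<notin> closure \<Omega>" for k y
    using f E_cfun that by (auto simp: cfun_space_def)
  ultimately have cfun: "(\<lambda>y. \<Sum>k. f k y) \<in> cfun_space \<Omega>"
    by (simp add: cfun_space_def)
  show ?thesis
  proof (rule E_closed[OF cfun], intro allI impI)
    fix e :: real assume "e > 0"
    then obtain n where "\<forall>y. dist (S n y) (\<Sum>k. f k y) < e"
      using uniform_limitD[OF lim \<open>e > 0\<close>] unfolding eventually_sequentially by blast
    then show "\<exists>g\<in>E. \<forall>y\<in>closure \<Omega>. cmod ((\<Sum>k. f k y) - g y) \<le> e"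
      using S_E by (metis dist_commute dist_norm less_imp_le)
  qed
qed

definition peak_weight :: "real \<Rightarrow> nat \<Rightarrow> real" where
  "peak_weight N k = N / ((N + k) * (N + k + 1))"

lemma peak_weight_pos: "0 < N \<Longrightarrow> 0 < peak_weight N k"
  by (simp add: peak_weight_def)

lemma peak_weight_eq_diff: "0 < N \<Longrightarrow> peak_weight N k = N / (N + k) - N / (N + Suc k)"
  by (simp add: peak_weight_def field_simps)

lemma sum_peak_weight: "0 < N \<Longrightarrow> (\<Sum>k<m. peak_weight N k) = 1 - N / (N + m)"
  using sum_lessThan_telescope'[of "\<lambda>k. N / (N + real k)" m] by (simp add: peak_weight_eq_diff)

lemma sums_peak_weight_tail:
  assumes "0 < N" shows "(\<lambda>i. peak_weight N (i + m)) sums (N / (N + m))"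
proof -
  have "(\<lambda>i. N / (N + real (i + m))) \<longlonglongrightarrow> 0" by real_asymp
  from telescope_sums'[OF this] show ?thesis
    using assms by (simp add: peak_weight_eq_diff add.commute)
qed

lemma sums_peak_weight: "0 < N \<Longrightarrow> peak_weight N sums 1"
  using sums_peak_weight_tail[of N 0] by simp

lemma peak_weight_mult: "0 < N \<Longrightarrow> peak_weight N k * (N + k) = N / (N + k + 1)"
  by (simp add: peak_weight_def add_pos_nonneg)

lemma sum_peak_weight_le:
  assumes "0 < N" "0 \<le> \<delta>" "\<And>k. k < m \<Longrightarrow> c k \<le> 1 + \<delta>"
  shows "(\<Sum>k<m. peak_weight N k * c k) \<le> 1 - N / (N + m) + \<delta>"
proof -
  have "(\<Sum>k<m. peak_weight N k * c k) \<le> (\<Sum>k<m. peak_weight N k * (1 + \<delta>))"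
    using assms peak_weight_pos[OF assms(1)] by (intro sum_mono mult_left_mono) (auto intro: less_imp_le)
  also have "\<dots> = (1 - N / (N + m)) * (1 + \<delta>)"
    using assms by (simp add: sum_peak_weight sum_distrib_right[symmetric])
  also have "\<dots> \<le> 1 - N / (N + m) + \<delta>"
    using assms by (simp add: algebra_simps divide_right_mono)
  finally show ?thesis .
qed

lemma suminf_peak_weight_tail_le:
  assumes "0 < N" "summable (\<lambda>k. peak_weight N k * c k)" "\<And>k. m \<le> k \<Longrightarrow> c k \<le> \<alpha>"
  shows "(\<Sum>i. peak_weight N (i + m) * c (i + m)) \<le> \<alpha> * (N / (N + m))"
proof -
  have \<alpha>_sums: "(\<lambda>i. peak_weight N (i + m) * \<alpha>) sums (N / (N + m) * \<alpha>)"
    by (rule sums_mult2[OF sums_peak_weight_tail[OF assms(1)]])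
  have "summable (\<lambda>i. peak_weight N (i + m) * c (i + m))"
    using assms(2) summable_iff_shift[of "\<lambda>k. peak_weight N k * c k" m] by simp
  moreover have "peak_weight N (i + m) * c (i + m) \<le> peak_weight N (i + m) * \<alpha>" for i
    using assms(3) peak_weight_pos[OF assms(1)] by (intro mult_left_mono) (auto intro: less_imp_le)
  ultimately show ?thesis
    using suminf_le[OF _ _ sums_summable[OF \<alpha>_sums]] \<alpha>_sums by (simp add: sums_iff mult.commute)
qed

text \<open>The terms beyond \<open>m\<close> save \<open>(1 - \<alpha>) N / (N + m + 1)\<close> against the total weight \<open>1\<close>; the
  hypotheses on the other terms are chosen so that their excess costs at most half of that.\<close>

lemma peak_weighted_sum_lt_1:
  fixes N \<alpha> :: real and c :: "nat \<Rightarrow> real"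
  assumes N: "1 \<le> N" and \<alpha>: "\<alpha> < 1" and summable: "summable (\<lambda>k. peak_weight N k * c k)"
    and before: "\<And>k. k < m \<Longrightarrow> c k \<le> 1 + (1 - \<alpha>) / (4 * (N + m + 1))"
    and at: "c m \<le> (1 - \<alpha>) / 4 * (N + m)"
    and after: "\<And>k. m < k \<Longrightarrow> c k \<le> \<alpha>"
  shows "(\<Sum>k. peak_weight N k * c k) < 1"
proof -
  define q where "q = N + m + 1"
  define \<delta> where "\<delta> = (1 - \<alpha>) / (4 * q)"
  have q: "0 < q" and "0 < N" "0 \<le> \<delta>" using N \<alpha> by (simp_all add: q_def \<delta>_def)
  have head: "(\<Sum>k<m. peak_weight N k * c k) \<le> 1 - N / (N + m) + \<delta>"
    using before by (intro sum_peak_weight_le[OF \<open>0 < N\<close> \<open>0 \<le> \<delta>\<close>]) (simp add: \<delta>_def q_def)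
  have "peak_weight N m * c m \<le> peak_weight N m * ((1 - \<alpha>) / 4 * (N + m))"
    using at peak_weight_pos[OF \<open>0 < N\<close>] by (intro mult_left_mono) (auto intro: less_imp_le)
  also have "\<dots> = (1 - \<alpha>) / 4 * (peak_weight N m * (N + m))"
    by (simp add: mult_ac)
  finally have middle: "peak_weight N m * c m \<le> (1 - \<alpha>) / 4 * (N / q)"
    using peak_weight_mult[OF \<open>0 < N\<close>, of m] by (simp add: q_def)
  have tail: "(\<Sum>i. peak_weight N (i + Suc m) * c (i + Suc m)) \<le> \<alpha> * (N / q)"
    using suminf_peak_weight_tail_le[OF \<open>0 < N\<close> summable, of "Suc m" \<alpha>] after
    by (simp add: q_def add_ac)
  have "\<delta> + (1 - \<alpha>) / 4 * (N / q) = (1 - \<alpha>) * (1 + N) / (4 * q)"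
    using q by (simp add: \<delta>_def field_simps)
  also have "\<dots> < (1 - \<alpha>) * (4 * N) / (4 * q)"
    using N \<alpha> q by (intro divide_strict_right_mono mult_strict_left_mono) auto
  also have "\<dots> = N / q - \<alpha> * (N / q)"
    using q by (simp add: field_simps)
  finally have saving: "\<delta> + (1 - \<alpha>) / 4 * (N / q) < N / q - \<alpha> * (N / q)" .
  have "N / q \<le> N / (N + m)"
    using N by (intro divide_left_mono) (auto simp: q_def)
  moreover have "(\<Sum>k. peak_weight N k * c k) =
      (\<Sum>i. peak_weight N (i + Suc m) * c (i + Suc m)) + (\<Sum>k<m. peak_weight N k * c k)
        + peak_weight N m * c m"
    using suminf_split_initial_segment[OF summable, of "Suc m"] by simp
  ultimately show ?thesis
    using head middle tail saving by linarith
qed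

lemma annulus_index_exists:
  fixes \<rho> :: "nat \<Rightarrow> real"
  assumes "\<rho> \<longlonglongrightarrow> 0" "0 < d"
  obtains m where "\<rho> (Suc m) < d" "0 < m \<Longrightarrow> d \<le> \<rho> m"
proof -
  obtain n where "\<rho> (Suc n) < d"
    using order_tendstoD(2)[OF assms] by (metis eventually_sequentially le_SucI order_refl)
  define m where "m = (LEAST m. \<rho> (Suc m) < d)"
  have "\<rho> (Suc m) < d"
    unfolding m_def by (rule LeastI) fact
  moreover have "d \<le> \<rho> m" if "0 < m"
    using not_less_Least[of "m - 1" "\<lambda>m. \<rho> (Suc m) < d"] that by (simp add: m_def[symmetric])
  ultimately show thesis by (rule that)
qed

lemma peak_of_weighted_sum:
  fixes \<Omega> :: "'a::euclidean_space set" and g :: "nat \<Rightarrow> 'a \<Rightarrow> complex"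
    and N \<alpha> :: real and \<rho> M :: "nat \<Rightarrow> real"
  assumes E: "closed_subspace_C \<Omega> E" and g_E: "\<And>k. g k \<in> E" and g_x: "\<And>k. g k x = 1"
    and \<alpha>: "\<alpha> < 1" and N: "1 \<le> N" and \<rho>: "decseq \<rho>" "\<rho> \<longlonglongrightarrow> 0"
    and far: "\<And>k y. y \<in> closure \<Omega> \<Longrightarrow> \<rho> k < dist y x \<Longrightarrow> cmod (g k y) \<le> \<alpha>"
    and near: "\<And>i k y. i < k \<Longrightarrow> y \<in> closure \<Omega> \<Longrightarrow> dist y x \<le> \<rho> k \<Longrightarrow>
                 cmod (g i y) \<le> 1 + (1 - \<alpha>) / (4 * (N + k + 1))"
    and bound: "\<And>k y. cmod (g k y) \<le> M k" and M: "\<And>k. M k \<le> (1 - \<alpha>) / 4 * (N + k)"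
    and summable: "summable (\<lambda>k. peak_weight N k * M k)"
  shows "\<exists>F\<in>E. peaks_at \<Omega> F x"
proof -
  define F where "F y = (\<Sum>k. of_real (peak_weight N k) * g k y)" for y
  have w_nonneg: "0 \<le> peak_weight N k" for k
    using N peak_weight_pos[of N k] by simp
  have norm_term: "cmod (of_real (peak_weight N k) * g k y) = peak_weight N k * cmod (g k y)" for k y
    using w_nonneg by (simp add: norm_mult)
  have term_le: "peak_weight N k * cmod (g k y) \<le> peak_weight N k * M k" for k y
    using bound w_nonneg by (rule mult_left_mono)
  have "F \<in> E"
    unfolding F_def
  proof (rule closed_subspace_C_suminf[OF E _ _ summable])
    show "(\<lambda>y. of_real (peak_weight N k) * g k y) \<in> E" for k
      using E g_E by (simp add: closed_subspace_C_def)
  qed (simp add: norm_term term_le)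
  moreover have "F x = 1"
  proof -
    have "(\<lambda>k. complex_of_real (peak_weight N k)) sums 1"
      using sums_of_real[OF sums_peak_weight[of N]] N by simp
    then show ?thesis by (simp add: F_def g_x sums_iff)
  qed
  moreover have "cmod (F y) < 1" if y: "y \<in> closure \<Omega>" "y \<noteq> x" for y
  proof -
    have "0 < dist y x" using y by simp
    then obtain m where m: "\<rho> (Suc m) < dist y x" "0 < m \<Longrightarrow> dist y x \<le> \<rho> m"
      using \<rho>(2) annulus_index_exists by blast
    have summable_y: "summable (\<lambda>k. peak_weight N k * cmod (g k y))"
      using summable term_le w_nonneg by (intro summable_comparison_test'[OF summable]) auto
    have "cmod (F y) \<le> (\<Sum>k. peak_weight N k * cmod (g k y))"
      unfolding F_def by (rule norm_suminf_le) (simp_all add: norm_term summable_y)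
    also have "\<dots> < 1"
    proof (rule peak_weighted_sum_lt_1[OF N \<alpha> summable_y])
      show "cmod (g k y) \<le> 1 + (1 - \<alpha>) / (4 * (N + m + 1))" if "k < m" for k
        using near[OF that y(1)] m(2) that by simp
      show "cmod (g m y) \<le> (1 - \<alpha>) / 4 * (N + m)"
        using bound M order_trans by blast
      show "cmod (g k y) \<le> \<alpha>" if "m < k" for k
        using far[OF y(1)] decseqD[OF \<rho>(1), of "Suc m" k] m(1) that by simp
    qed
    finally show ?thesis .
  qed
  ultimately show ?thesis
    unfolding peaks_at_def by blast
qed

lemma decay_radii_exist:
  fixes \<alpha> s t A C R :: real
  assumes "\<alpha> < 1" "0 < s" "0 < t" "t < 1" "0 < A" "0 < C" "0 < R"
  obtains N :: nat and \<rho> :: "nat \<Rightarrow> real"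
  where "1 \<le> N" "\<And>k. 0 < \<rho> k" "\<And>k. \<rho> k \<le> R" "\<And>k. \<rho> k < 1" "decseq \<rho>" "\<rho> \<longlonglongrightarrow> 0"
    "\<And>i k. i < k \<Longrightarrow> (2 * \<rho> k / (A * \<rho> i)) powr s \<le> (1 - \<alpha>) / (4 * (real N + real k + 1))"
    "\<And>k. C * ln (1 / \<rho> k) powr t \<le> (1 - \<alpha>) / 4 * (real N + real k)"
    "summable (\<lambda>k. peak_weight N k * (C * ln (1 / \<rho> k) powr t))"
proof -
  define a where "a = (1 + 1 / t) / 2"
  have a: "1 < a" "a * t < 1"
    using assms by (simp_all add: a_def field_simps)
  define r where "r j = exp (- (j powr a))" for j :: real
  have r_antimono: "r j' \<le> r j" if "0 \<le> j" "j \<le> j'" for j j'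
    using that a by (simp add: r_def powr_mono2)
  have "eventually (\<lambda>j. 1 \<le> j \<and> r j \<le> R \<and>
      (2 * r j / (A * r (j - 1))) powr s \<le> (1 - \<alpha>) / (4 * (j + 1)) \<and>
      C * ln (1 / r j) powr t \<le> (1 - \<alpha>) / 4 * j) at_top"
    unfolding r_def using assms a by (intro eventually_conj; real_asymp)
  then obtain j0 where j0: "\<And>j. j0 \<le> j \<Longrightarrow> 1 \<le> j \<and> r j \<le> R \<and>
      (2 * r j / (A * r (j - 1))) powr s \<le> (1 - \<alpha>) / (4 * (j + 1)) \<and>
      C * ln (1 / r j) powr t \<le> (1 - \<alpha>) / 4 * j"
    unfolding eventually_at_top_linorder by blast
  define N where "N = nat \<lceil>j0\<rceil>"
  define \<rho> where "\<rho> k = r (N + k)" for k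
  have large: "j0 \<le> real N + real k" for k
    unfolding N_def by linarith
  have "decseq \<rho>"
    unfolding decseq_Suc_iff \<rho>_def by (intro allI r_antimono) auto
  show thesis
  proof
    show "1 \<le> N" using j0[OF large[of 0]] by simp
    show "0 < \<rho> k" "\<rho> k \<le> R" "\<rho> k < 1" for k
      using j0[OF large[of k]] by (simp_all add: \<rho>_def r_def)
    show "decseq \<rho>" by fact
    show "\<rho> \<longlonglongrightarrow> 0"
      unfolding \<rho>_def r_def using a by real_asymp
    show "(2 * \<rho> k / (A * \<rho> i)) powr s \<le> (1 - \<alpha>) / (4 * (real N + real k + 1))" if "i < k" for i k
    proof -
      have "\<rho> (k - 1) \<le> \<rho> i"
        using decseqD[OF \<open>decseq \<rho>\<close>] that by simp
      then have "2 * \<rho> k / (A * \<rho> i) \<le> 2 * \<rho> k / (A * \<rho> (k - 1))"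
        using assms by (intro divide_left_mono mult_left_mono) (auto simp: \<rho>_def r_def)
      then have "(2 * \<rho> k / (A * \<rho> i)) powr s \<le> (2 * \<rho> k / (A * \<rho> (k - 1))) powr s"
        using assms by (intro powr_mono2) (auto simp: \<rho>_def r_def)
      also have "\<dots> = (2 * r (real N + real k) / (A * r (real N + real k - 1))) powr s"
        using that by (simp add: \<rho>_def of_nat_diff)
      also have "\<dots> \<le> (1 - \<alpha>) / (4 * (real N + real k + 1))"
        using j0[OF large[of k]] by blast
      finally show ?thesis .
    qed
    show "C * ln (1 / \<rho> k) powr t \<le> (1 - \<alpha>) / 4 * (real N + real k)" for k
      using j0[OF large[of k]] by (simp add: \<rho>_def)
    have "(\<lambda>k. peak_weight N k * (C * ln (1 / \<rho> k) powr t)) \<in> O(\<lambda>k. real k powr (a * t - 2))"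
      unfolding \<rho>_def r_def peak_weight_def using assms a by real_asymp
    moreover have "summable (\<lambda>k. norm (real k powr (a * t - 2)))"
      using a by (simp add: summable_real_powr_iff)
    ultimately show "summable (\<lambda>k. peak_weight N k * (C * ln (1 / \<rho> k) powr t))"
      by (rule summable_comparison_test_bigo[rotated])
  qed
qed

lemma rx_inter_cball:
  fixes T :: "'a::euclidean_space set"
  assumes "connected T" "x \<in> T" "z \<in> T" "0 \<le> r" "r \<le> dist z x"
  shows "rx x (T \<inter> cball x r) = r"
proof -
  have "connected ((\<lambda>y. dist y x) ` T)"
    using assms(1) by (intro connected_continuous_image continuous_intros)
  then have "r \<in> (\<lambda>y. dist y x) ` T"
    by (rule connectedD_interval) (use assms in force)+
  then have "r \<in> (\<lambda>y. dist y x) ` (T \<inter> cball x r)"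
    by (auto simp: dist_commute)
  then show ?thesis
    unfolding rx_def by (rule cSup_eq_maximum) (auto simp: dist_commute)
qed

lemma nbhd_in_closure_inter_cball:
  "0 < r \<Longrightarrow> nbhd_in_closure \<Omega> x (closure \<Omega> \<inter> cball x r)"
  unfolding nbhd_in_closure_def by (intro conjI exI[of _ "ball x r"]) auto

lemma bump_sequence_exists:
  fixes \<Omega> :: "'a::euclidean_space set" and \<rho> :: "nat \<Rightarrow> real"
  assumes E: "closed_subspace_C \<Omega> E" and "connected \<Omega>" "x \<in> closure \<Omega>" "z \<in> closure \<Omega>"
    and \<alpha>: "\<alpha> < 1"
    and \<rho>: "\<And>k. 0 < \<rho> k" "\<And>k. \<rho> k \<le> dist z x" "\<And>k. \<rho> k < 1"
    and H: "\<forall>U. nbhd_in_closure \<Omega> x U \<and> rx x U < 1 \<longrightarrow>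
             (\<exists>f\<in>E. f x = 1 \<and>
                (\<forall>y\<in>closure \<Omega> - U. cmod (f y) \<le> \<alpha>) \<and>
                (\<forall>y\<in>U. cmod (f y) \<le> C * (ln (1 / rx x U)) powr t) \<and>
                (\<forall>\<epsilon>. 0 < \<epsilon> \<and> \<epsilon> < 1 \<longrightarrow>
                   Bcl \<Omega> x (A * rx x U * \<epsilon>) \<subseteq> {y\<in>closure \<Omega>. cmod (f y) < 1 + \<epsilon> powr s}))"
  obtains g where "\<And>k. g k \<in> E" "\<And>k. g k x = 1"
    "\<And>k y. y \<in> closure \<Omega> \<Longrightarrow> \<rho> k < dist y x \<Longrightarrow> cmod (g k y) \<le> \<alpha>"
    "\<And>k y. cmod (g k y) \<le> C * ln (1 / \<rho> k) powr t"
    "\<And>k \<epsilon> y. 0 < \<epsilon> \<Longrightarrow> \<epsilon> < 1 \<Longrightarrow> y \<in> closure \<Omega> \<Longrightarrow> dist y x < A * \<rho> k * \<epsilon> \<Longrightarrow>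
       cmod (g k y) < 1 + \<epsilon> powr s"
proof -
  define U where "U k = closure \<Omega> \<inter> cball x (\<rho> k)" for k
  have rx: "rx x (U k) = \<rho> k" for k
    unfolding U_def using assms(2-4) \<rho>(2) less_imp_le[OF \<rho>(1)]
    by (intro rx_inter_cball[where z = z] connected_imp_connected_closure) auto
  have nbhd: "nbhd_in_closure \<Omega> x (U k)" for k
    unfolding U_def by (rule nbhd_in_closure_inter_cball[OF \<rho>(1)])
  have bump: "\<forall>k. \<exists>f. f \<in> E \<and> f x = 1 \<and> (\<forall>y\<in>closure \<Omega> - U k. cmod (f y) \<le> \<alpha>) \<and>
      (\<forall>y\<in>U k. cmod (f y) \<le> C * ln (1 / \<rho> k) powr t) \<and>
      (\<forall>\<epsilon>. 0 < \<epsilon> \<and> \<epsilon> < 1 \<longrightarrow>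
         Bcl \<Omega> x (A * \<rho> k * \<epsilon>) \<subseteq> {y\<in>closure \<Omega>. cmod (f y) < 1 + \<epsilon> powr s})"
    using H nbhd \<rho>(3) unfolding rx[symmetric] by blast
  obtain g where g: "\<And>k. g k \<in> E" "\<And>k. g k x = 1"
    and g_outside: "\<And>k y. y \<in> closure \<Omega> - U k \<Longrightarrow> cmod (g k y) \<le> \<alpha>"
    and g_inside: "\<And>k y. y \<in> U k \<Longrightarrow> cmod (g k y) \<le> C * ln (1 / \<rho> k) powr t"
    and g_near: "\<And>k \<epsilon>. 0 < \<epsilon> \<Longrightarrow> \<epsilon> < 1 \<Longrightarrow>
       Bcl \<Omega> x (A * \<rho> k * \<epsilon>) \<subseteq> {y\<in>closure \<Omega>. cmod (g k y) < 1 + \<epsilon> powr s}"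
    using choice[OF bump] by blast
  show thesis
  proof
    show "g k \<in> E" "g k x = 1" for k by (fact g)+
    show far: "cmod (g k y) \<le> \<alpha>" if "y \<in> closure \<Omega>" "\<rho> k < dist y x" for k y
      using g_outside that by (simp add: U_def dist_commute)
    show "cmod (g k y) < 1 + \<epsilon> powr s"
      if "0 < \<epsilon>" "\<epsilon> < 1" "y \<in> closure \<Omega>" "dist y x < A * \<rho> k * \<epsilon>" for k \<epsilon> y
      using g_near[OF that(1,2), of k] that(3,4) by (auto simp: Bcl_def dist_commute)
    show "cmod (g k y) \<le> C * ln (1 / \<rho> k) powr t" for k y
    proof -
      txt \<open>At \<open>x \<in> U k\<close> the logarithmic bound meets \<open>|g k x| = 1 > \<alpha>\<close>, so it bounds \<open>g k\<close> everywhere.\<close>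
      have "x \<in> U k" using assms(3) \<rho>(1) by (simp add: U_def less_imp_le)
      then have one_le: "1 \<le> C * ln (1 / \<rho> k) powr t"
        using g_inside[of x k] g(2) by simp
      have outside: "g k y = 0" if "y \<notin> closure \<Omega>"
        using g(1) E that by (auto simp: closed_subspace_C_def cfun_space_def)
      consider "y \<in> U k" | "y \<in> closure \<Omega> - U k" | "y \<notin> closure \<Omega>"
        by (auto simp: U_def)
      then show ?thesis
        by cases (use g_inside g_outside outside one_le \<alpha> in fastforce)+
    qed
  qed
qed

lemma peak_function_exists:
  fixes \<Omega> :: "'a::euclidean_space set"
  assumes "open \<Omega>" "connected \<Omega>" "\<Omega> \<noteq> {}" "x \<in> closure \<Omega>" and E: "closed_subspace_C \<Omega> E"
    and \<alpha>: "0 \<le> \<alpha>" and params: "\<alpha> < 1" "0 < s" "0 < t" "t < 1" "0 < A" "0 < C"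
    and H: "\<forall>U. nbhd_in_closure \<Omega> x U \<and> rx x U < 1 \<longrightarrow>
             (\<exists>f\<in>E. f x = 1 \<and>
                (\<forall>y\<in>closure \<Omega> - U. cmod (f y) \<le> \<alpha>) \<and>
                (\<forall>y\<in>U. cmod (f y) \<le> C * (ln (1 / rx x U)) powr t) \<and>
                (\<forall>\<epsilon>. 0 < \<epsilon> \<and> \<epsilon> < 1 \<longrightarrow>
                   Bcl \<Omega> x (A * rx x U * \<epsilon>) \<subseteq> {y\<in>closure \<Omega>. cmod (f y) < 1 + \<epsilon> powr s}))"
  shows "\<exists>F\<in>E. peaks_at \<Omega> F x"
proof -
  obtain z where z: "z \<in> closure \<Omega>" "z \<noteq> x"
  proof -
    have "\<Omega> \<noteq> {x}" using assms(1) not_open_singleton by blast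
    then obtain z where "z \<in> \<Omega>" "z \<noteq> x" using assms(3) by blast
    then show thesis using that closure_subset by blast
  qed
  then have "0 < dist z x" by simp
  then obtain N \<rho> where N: "1 \<le> N" and \<rho>: "\<And>k. 0 < \<rho> k" "\<And>k. \<rho> k \<le> dist z x" "\<And>k. \<rho> k < 1"
      "decseq \<rho>" "\<rho> \<longlonglongrightarrow> 0"
    and ratio: "\<And>i k. i < k \<Longrightarrow> (2 * \<rho> k / (A * \<rho> i)) powr s \<le> (1 - \<alpha>) / (4 * (real N + real k + 1))"
    and bound: "\<And>k. C * ln (1 / \<rho> k) powr t \<le> (1 - \<alpha>) / 4 * (real N + real k)"
    and summable: "summable (\<lambda>k. peak_weight N k * (C * ln (1 / \<rho> k) powr t))"
    by (rule decay_radii_exist[OF params]) (rule that)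
  obtain g where g: "\<And>k. g k \<in> E" "\<And>k. g k x = 1"
    and far: "\<And>k y. y \<in> closure \<Omega> \<Longrightarrow> \<rho> k < dist y x \<Longrightarrow> cmod (g k y) \<le> \<alpha>"
    and g_bound: "\<And>k y. cmod (g k y) \<le> C * ln (1 / \<rho> k) powr t"
    and near: "\<And>k \<epsilon> y. 0 < \<epsilon> \<Longrightarrow> \<epsilon> < 1 \<Longrightarrow> y \<in> closure \<Omega> \<Longrightarrow> dist y x < A * \<rho> k * \<epsilon> \<Longrightarrow>
       cmod (g k y) < 1 + \<epsilon> powr s"
    by (rule bump_sequence_exists[OF E assms(2,4) z(1) params(1) \<rho>(1-3) H]) (rule that)
  show ?thesis
  proof (rule peak_of_weighted_sum[OF E g params(1) _ \<rho>(4,5) far _ g_bound bound summable])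
    show "1 \<le> real N" using N by simp
    show "cmod (g i y) \<le> 1 + (1 - \<alpha>) / (4 * (real N + real k + 1))"
      if "i < k" "y \<in> closure \<Omega>" "dist y x \<le> \<rho> k" for i k y
    proof -
      define \<epsilon> where "\<epsilon> = 2 * \<rho> k / (A * \<rho> i)"
      have "0 < \<epsilon>" using \<rho>(1) params by (simp add: \<epsilon>_def)
      have small: "\<epsilon> powr s \<le> (1 - \<alpha>) / (4 * (real N + real k + 1))"
        using ratio[OF that(1)] by (simp add: \<epsilon>_def)
      also have "\<dots> < 1" using \<alpha> by (simp add: field_simps)
      finally have "\<epsilon> < 1"
        using \<open>0 < \<epsilon>\<close> params(2) by (metis ge_one_powr_ge_zero less_le not_less)
      moreover have "dist y x < A * \<rho> i * \<epsilon>"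
        using that(3) \<rho>(1)[of k] \<rho>(1)[of i] params by (simp add: \<epsilon>_def)
      ultimately show ?thesis
        using near[OF \<open>0 < \<epsilon>\<close> _ that(2)] small by fastforce
    qed
  qed
qed

theorem theorem1p1:
  fixes \<Omega> :: "'a::euclidean_space set" and x :: 'a and E :: "('a \<Rightarrow> complex) set"
  assumes "open \<Omega>" and "connected \<Omega>" and "bounded \<Omega>" and "\<Omega> \<noteq> {}"
    and "x \<in> closure \<Omega>"
    and "closed_subspace_C \<Omega> E"
    and "\<exists>\<alpha> s t A C::real. 0 < \<alpha> \<and> \<alpha> < 1 \<and> 0 < s \<and> s \<le> 1 \<and> 0 < t \<and> t < 1 \<and>
          0 < A \<and> A < 1 \<and> C > 0 \<and>
          (\<forall>U. nbhd_in_closure \<Omega> x U \<and> rx x U < 1 \<longrightarrow>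
             (\<exists>f\<in>E. f x = 1 \<and>
                (\<forall>y\<in>closure \<Omega> - U. cmod (f y) \<le> \<alpha>) \<and>
                (\<forall>y\<in>U. cmod (f y) \<le> C * (ln (1 / rx x U)) powr t) \<and>
                (\<forall>\<epsilon>. 0 < \<epsilon> \<and> \<epsilon> < 1 \<longrightarrow>
                   Bcl \<Omega> x (A * rx x U * \<epsilon>) \<subseteq> {y\<in>closure \<Omega>. cmod (f y) < 1 + \<epsilon> powr s})))"
  shows "\<exists>F\<in>E. peaks_at \<Omega> F x"
  using assms(7)
  by (elim exE conjE) (rule peak_function_exists[OF assms(1,2,4,5,6) less_imp_le]; assumption)

end
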